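(* Let $R$ be a commutative ring which is free as an abelian group with $\mathbb{Z}$-basis $V$, let $n\ge2$ and $p$ a prime, and write $\Gamma_m=\Gamma(SL_n(R),p^m)$. Suppose $|V|<\infty$ or $s=1$. Then for all $r\ge s\ge1$, $$\Gamma_r/\Gamma_{r+s}\cong\bigoplus_{n^2-1}\mathbb{Z}/p^s\mathbb{Z}[V].$$
   Context: $\Gamma(SL_n(R),p^m)=\ker\big(SL_n(R)\to SL_n(R\otimes_{\mathbb{Z}}\mathbb{Z}/p^m)\big)$. $\mathbb{Z}/p^s\mathbb{Z}[V]$ denotes the free $\mathbb{Z}/p^s$-module with basis $V$ (equivalently the additive group of $R/p^sR$); the right-hand side is a direct sum of $n^2-1$ copies of it. *)

theory Defs
  imports "HOL-Analysis.Analysis" "HOL-Algebra.Coset" "HOL-Algebra.Product_Groups"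
    "HOL-Algebra.Elementary_Groups"
begin

definition Z_basis :: "'a::comm_ring_1 set \<Rightarrow> bool" where
  "Z_basis V \<longleftrightarrow>
     (\<forall>x. \<exists>c :: 'a \<Rightarrow> int. finite {v\<in>V. c v \<noteq> 0} \<and>
            x = (\<Sum>v\<in>{v\<in>V. c v \<noteq> 0}. of_int (c v) * v)) \<and>
     (\<forall>(c :: 'a \<Rightarrow> int) F. finite F \<and> F \<subseteq> V \<and> (\<Sum>v\<in>F. of_int (c v) * v) = 0
            \<longrightarrow> (\<forall>v\<in>F. c v = 0))"

definition SL :: "('a::comm_ring_1 ^'n::finite^'n) monoid" where
  "SL = \<lparr>carrier = {A. det A = 1}, monoid.mult = (**), one = mat 1\<rparr>"

text \<open>Principal congruence subgroup Gamma(SL_n(R), p^m): kernel of reduction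
  SL_n(R) \<rightarrow> SL_n(R/p^m R), i.e. matrices congruent to the identity mod p^m R.\<close>
definition cong_sub :: "nat \<Rightarrow> nat \<Rightarrow> ('a::comm_ring_1 ^'n::finite^'n) set" where
  "cong_sub p m = {A \<in> carrier SL. \<forall>i j. \<exists>b. A$i$j - (mat 1 :: 'a^'n^'n)$i$j = of_nat (p^m) * b}"

text \<open>Free Z/q-module with basis V, as an abelian group.\<close>
definition free_mod_group :: "nat \<Rightarrow> 'b set \<Rightarrow> ('b \<Rightarrow> int) monoid" where
  "free_mod_group q V = sum_group V (\<lambda>_. integer_mod_group q)"

end

(*
  Write A \<in> \<Gamma>_r as A = I + p^r X; the matrix X is unique because R is torsion-free. Since
  (I + p^r X)(I + p^r Y) = I + p^r (X + Y + p^r XY) and s \<le> r, the map A \<mapsto> X mod p^s is a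
  homomorphism from \<Gamma>_r to the additive group of n \<times> n matrices over R/p^s R, with kernel
  \<Gamma>_{r+s}. Once all entries of X except x = X_cc are divisible by p^s, expanding
  det A = 1 modulo p^{r+s} gives p^r x \<equiv> 0, so x is divisible by p^s as well. Hence it
  suffices to record the other n^2 - 1 entries, each in R/p^s R \<cong> (Z/p^s)[V]. Surjectivity
  follows because the image is a subgroup containing the reductions of the elementary
  transvections I + p^r x E_ij and of I + p^r x (e_i - e_c)(e_i + e_c)^T.
*)

theory Submission
  imports Defs
begin

section \<open>Coordinates with respect to a \<open>\<int>\<close>-basis\<close>

definition basis_coord :: "'a::comm_ring_1 set \<Rightarrow> 'a \<Rightarrow> 'a \<Rightarrow> int" where
  "basis_coord V x v = (if v \<in> V then (SOME c. finite {v\<in>V. c v \<noteq> 0} \<and>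
            x = (\<Sum>v\<in>{v\<in>V. c v \<noteq> 0}. of_int (c v) * v)) v else 0)"

lemma basis_coord_outside: "v \<notin> V \<Longrightarrow> basis_coord V x v = 0"
  by (simp add: basis_coord_def)

context
  fixes V :: "'a::comm_ring_1 set"
  assumes basis: "Z_basis V"
begin

lemma basis_coord_support: "finite {v. basis_coord V x v \<noteq> 0}" "{v. basis_coord V x v \<noteq> 0} \<subseteq> V"
  and basis_coord_sum: "x = (\<Sum>v | basis_coord V x v \<noteq> 0. of_int (basis_coord V x v) * v)"
proof -
  let ?repr = "\<lambda>c. finite {v\<in>V. c v \<noteq> 0} \<and> x = (\<Sum>v\<in>{v\<in>V. c v \<noteq> 0}. of_int (c v) * v)"
  define c where "c = (SOME c. ?repr c)"
  have "\<exists>c. ?repr c" using basis unfolding Z_basis_def by blast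
  then have c: "?repr c" unfolding c_def by (rule someI_ex)
  have support: "{v. basis_coord V x v \<noteq> 0} = {v\<in>V. c v \<noteq> 0}"
    by (auto simp: basis_coord_def c_def)
  show "finite {v. basis_coord V x v \<noteq> 0}" "{v. basis_coord V x v \<noteq> 0} \<subseteq> V"
    using c unfolding support by auto
  have "(\<Sum>v\<in>{v\<in>V. c v \<noteq> 0}. of_int (basis_coord V x v) * v) = (\<Sum>v\<in>{v\<in>V. c v \<noteq> 0}. of_int (c v) * v)"
    by (rule sum.cong) (auto simp: basis_coord_def c_def)
  then show "x = (\<Sum>v | basis_coord V x v \<noteq> 0. of_int (basis_coord V x v) * v)"
    using c unfolding support by simp
qed

lemma basis_coord_sum_superset:
  assumes "finite F" "{v. basis_coord V x v \<noteq> 0} \<subseteq> F"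
  shows "x = (\<Sum>v\<in>F. of_int (basis_coord V x v) * v)"
proof -
  have "(\<Sum>v\<in>F. of_int (basis_coord V x v) * v) = (\<Sum>v | basis_coord V x v \<noteq> 0. of_int (basis_coord V x v) * v)"
    by (rule sum.mono_neutral_right) (use assms in auto)
  then show ?thesis using basis_coord_sum by simp
qed

lemma Z_basis_independent:
  assumes "finite F" "F \<subseteq> V" "(\<Sum>v\<in>F. of_int (c v) * v) = 0" "v \<in> F"
  shows "c v = 0"
proof -
  have "\<forall>(c :: 'a \<Rightarrow> int) F. finite F \<and> F \<subseteq> V \<and> (\<Sum>v\<in>F. of_int (c v) * v) = 0 \<longrightarrow> (\<forall>v\<in>F. c v = 0)"
    using basis unfolding Z_basis_def by (rule conjunct2)
  with assms show ?thesis by blast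
qed

lemma basis_coord_unique:
  assumes "finite F" "F \<subseteq> V" "x = (\<Sum>v\<in>F. of_int (c v) * v)"
  shows "basis_coord V x v = (if v \<in> F then c v else 0)"
proof -
  let ?G = "F \<union> {v. basis_coord V x v \<noteq> 0}"
  have G: "finite ?G" "?G \<subseteq> V" using assms basis_coord_support by auto
  define c' where "c' v = (if v \<in> F then c v else 0)" for v
  have "(\<Sum>v\<in>?G. of_int (c' v) * v) = (\<Sum>v\<in>F. of_int (c v) * v)"
    unfolding c'_def by (rule sum.mono_neutral_cong_right) (use G in auto)
  with assms(3) have "(\<Sum>v\<in>?G. of_int (c' v) * v) = x" by simp
  moreover have "(\<Sum>v\<in>?G. of_int (basis_coord V x v) * v) = x"
    by (rule basis_coord_sum_superset[symmetric]) (use G in auto)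
  ultimately have "(\<Sum>v\<in>?G. of_int (basis_coord V x v - c' v) * v) = 0"
    by (simp add: left_diff_distrib sum_subtractf)
  with G have "basis_coord V x v - c' v = 0" if "v \<in> ?G" for v
    using that by (rule Z_basis_independent)
  then show ?thesis by (cases "v \<in> ?G") (auto simp: c'_def)
qed

lemma basis_coord_of_coeffs:
  assumes "finite {v\<in>V. g v \<noteq> 0}" "v \<in> V"
  shows "basis_coord V (\<Sum>v\<in>{v\<in>V. g v \<noteq> 0}. of_int (g v) * v) v = g v"
  using basis_coord_unique[OF assms(1) _ refl, where v = v] assms(2) by auto

lemma basis_coord_add: "basis_coord V (x + y) v = basis_coord V x v + basis_coord V y v"
  and basis_coord_of_nat_mult: "basis_coord V (of_nat k * x) v = int k * basis_coord V x v"
proof -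
  let ?F = "{v. basis_coord V x v \<noteq> 0} \<union> {v. basis_coord V y v \<noteq> 0}"
  have F: "finite ?F" "?F \<subseteq> V" using basis_coord_support by auto
  have x: "(\<Sum>v\<in>?F. of_int (basis_coord V x v) * v) = x"
    by (rule basis_coord_sum_superset[symmetric]) (use F in auto)
  have y: "(\<Sum>v\<in>?F. of_int (basis_coord V y v) * v) = y"
    by (rule basis_coord_sum_superset[symmetric]) (use F in auto)
  have "x + y = (\<Sum>v\<in>?F. of_int (basis_coord V x v + basis_coord V y v) * v)"
    unfolding of_int_add distrib_right sum.distrib x y ..
  from basis_coord_unique[OF F this]
  show "basis_coord V (x + y) v = basis_coord V x v + basis_coord V y v" by simp
  have "of_nat k * x = (\<Sum>v\<in>?F. of_int (int k * basis_coord V x v) * v)"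
    unfolding of_int_mult of_int_of_nat_eq mult.assoc sum_distrib_left[symmetric] x ..
  from basis_coord_unique[OF F this]
  show "basis_coord V (of_nat k * x) v = int k * basis_coord V x v" by simp
qed

lemma basis_coord_eq_0_iff: "(\<forall>v. basis_coord V x v = 0) \<longleftrightarrow> x = 0"
proof
  assume "\<forall>v. basis_coord V x v = 0"
  then have "x = (\<Sum>v\<in>{}. of_int (basis_coord V x v) * v)"
    by (intro basis_coord_sum_superset) auto
  then show "x = 0" by simp
next
  assume "x = 0"
  then have "x = (\<Sum>v\<in>{}. of_int 0 * v)" by simp
  from basis_coord_unique[OF _ _ this] show "\<forall>v. basis_coord V x v = 0" by simp
qed

lemma basis_coord_zero [simp]: "basis_coord V 0 v = 0"
  using basis_coord_eq_0_iff[of 0] by blast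

lemma Z_basis_torsion_free:
  assumes "k \<noteq> 0" "of_nat k * x = (0 :: 'a)"
  shows "x = 0"
proof -
  have "int k * basis_coord V x v = basis_coord V (of_nat k * x) v" for v
    by (rule basis_coord_of_nat_mult[symmetric])
  then have "int k * basis_coord V x v = 0" for v
    using assms(2) by simp
  then show ?thesis using assms(1) basis_coord_eq_0_iff[of x] by simp
qed

lemma Z_basis_mult_left_cancel: "k \<noteq> 0 \<Longrightarrow> of_nat k * x = of_nat k * (y :: 'a) \<Longrightarrow> x = y"
  using Z_basis_torsion_free[of k "x - y"] by (simp add: right_diff_distrib)

lemma Z_basis_of_nat_dvd_iff: "of_nat q dvd x \<longleftrightarrow> (\<forall>v. int q dvd basis_coord V x v)"
proof
  assume "of_nat q dvd x"
  then show "\<forall>v. int q dvd basis_coord V x v"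
    by (auto simp: basis_coord_of_nat_mult)
next
  assume dvd: "\<forall>v. int q dvd basis_coord V x v"
  let ?P = "{v. basis_coord V x v \<noteq> 0}"
  have "x = (\<Sum>v\<in>?P. of_int (int q * (basis_coord V x v div int q)) * v)"
    using basis_coord_sum dvd by simp
  also have "\<dots> = of_nat q * (\<Sum>v\<in>?P. of_int (basis_coord V x v div int q) * v)"
    by (simp add: sum_distrib_left mult.assoc)
  finally show "of_nat q dvd x" by (rule dvdI)
qed

end


section \<open>Matrices and determinants\<close>

lemma mat_mult_nth [simp]: "(mat c ** X) $ i $ j = c * X $ i $ j"
  for X :: "'a::semiring_1 ^ 'n::finite ^ 'm"
  by (simp add: matrix_matrix_mult_def mat_def if_distrib if_distribR cong: if_cong)

lemma mat_mult_commute: "mat c ** X = X ** mat c"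
  for X :: "'a::comm_semiring_1 ^ 'n::finite ^ 'n"
  by (simp add: vec_eq_iff matrix_matrix_mult_def mat_def if_distrib if_distribR mult.commute cong: if_cong)

lemma matrix_add_rdistrib: "(A + B) ** C = A ** C + B ** C"
  for A B :: "'a::semiring_1 ^ 'n::finite ^ 'm"
  by (simp add: vec_eq_iff matrix_matrix_mult_def distrib_right sum.distrib)

lemma mat_one_add_scaled_mult:
  fixes X Y :: "'a::comm_ring_1 ^ 'n::finite ^ 'n"
  shows "(mat 1 + mat t ** X) ** (mat 1 + mat t ** Y) = mat 1 + mat t ** (X + Y + mat t ** (X ** Y))"
  by (simp add: matrix_add_ldistrib matrix_add_rdistrib matrix_mul_assoc mat_mult_commute[of t X])

lemma mat_mult_mat: "mat a ** mat b = (mat (a * b) :: 'a::semiring_1 ^ 'n::finite ^ 'n)"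
  unfolding vec_eq_iff mat_mult_nth by (simp add: mat_def)

lemma mat_mult_axis: "mat c ** axis i (axis j a) = axis i (axis j (c * a))"
  for a :: "'a::semiring_1"
  by (simp add: vec_eq_iff axis_def)

lemma det_mat_one_add_axis_diag: "det (mat 1 + axis i (axis i a)) = 1 + (a :: 'a::comm_ring_1)"
proof -
  have "det (mat 1 + axis i (axis i a)) = (\<Prod>k\<in>UNIV. (mat 1 + axis i (axis i a)) $ k $ k)"
    by (rule det_diagonal) (auto simp: mat_def axis_def)
  also have "\<dots> = (\<Prod>k\<in>UNIV. if k = i then 1 + a else 1)"
    by (rule prod.cong) (simp_all add: mat_def axis_def)
  finally show ?thesis by simp
qed

lemma det_mat_one_add_axis:
  assumes "i \<noteq> j"
  shows "det (mat 1 + axis i (axis j a)) = (1 :: 'a::comm_ring_1)"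
proof -
  have "mat 1 + axis i (axis j a) = (\<chi> k. if k = i then row i (mat 1) + a *s row j (mat 1) else row k (mat 1))"
    using assms by (auto simp: vec_eq_iff row_def mat_def axis_def)
  then show ?thesis
    using det_row_operation[OF assms, of "mat 1" a] by simp
qed

lemma det_mat_one_add_axis_diff:
  fixes a :: "'a::comm_ring_1"
  assumes "i \<noteq> k"
  defines "v \<equiv> axis i a + axis k a"
  shows "det (mat 1 + (axis i v - axis k v)) = 1"
proof -
  let ?M = "mat 1 + (axis i v - axis k v)"
  define M1 where "M1 = (\<chi> l. if l = k then row k ?M + 1 *s row i ?M else row l ?M)"
  define M2 where "M2 = (\<chi> l. if l = i then row i M1 + (- a) *s row k M1 else row l M1)"
  define M3 where "M3 = (\<chi> l. if l = k then row k M2 + (- 1) *s row i M2 else row l M2)"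
  have "det M3 = det ?M"
    using assms(1) unfolding M1_def M2_def M3_def by (simp add: det_row_operation)
  moreover have "M3 = mat 1"
    using assms(1)
    by (auto simp: vec_eq_iff M1_def M2_def M3_def v_def row_def axis_def mat_def algebra_simps)
  ultimately show ?thesis by simp
qed

lemma prod_add_multiple_dvd: "t dvd (\<Prod>i\<in>F. a i + t * b i) - (\<Prod>i\<in>F. a i :: 'a::comm_ring_1)"
proof (induction F rule: infinite_finite_induct)
  case (insert i F)
  have "(\<Prod>i\<in>insert i F. a i + t * b i) - (\<Prod>i\<in>insert i F. a i)
      = a i * ((\<Prod>i\<in>F. a i + t * b i) - (\<Prod>i\<in>F. a i)) + t * (b i * (\<Prod>i\<in>F. a i + t * b i))"
    using insert.hyps by (simp add: algebra_simps)
  with insert.IH show ?case by simp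
qed simp_all

lemma det_add_multiple_dvd:
  fixes M N :: "'a::comm_ring_1 ^ 'n::finite ^ 'n"
  shows "t dvd det (M + mat t ** N) - det M"
proof -
  have "t dvd (\<Prod>i\<in>UNIV. (M + mat t ** N) $ i $ \<pi> i) - (\<Prod>i\<in>UNIV. M $ i $ \<pi> i)" for \<pi>
    using prod_add_multiple_dvd[of t "\<lambda>i. M $ i $ \<pi> i"] by simp
  then show ?thesis
    unfolding det_def sum_subtractf[symmetric] right_diff_distrib[symmetric]
    by (intro dvd_sum dvd_mult)
qed

definition adjugate :: "'a::comm_ring_1 ^ 'n::finite ^ 'n \<Rightarrow> 'a ^ 'n ^ 'n" where
  "adjugate A = (\<chi> i k. det (\<chi> l. if l = k then axis i 1 else row l A))"

lemma matrix_mul_adjugate: "A ** adjugate A = mat (det A)"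
proof -
  have rows: "(\<Sum>i\<in>UNIV. A$j$i *s axis i 1) = row j A" for j
    by (simp add: vec_eq_iff row_def sum_component axis_def vector_scalar_mult_def if_distrib cong: if_cong)
  have replace: "det (\<chi> l. if l = k then row j A else row l A) = (if j = k then det A else 0)" for j k
  proof (cases "j = k")
    case True
    then have "(\<chi> l. if l = k then row j A else row l A) = A"
      by (simp add: vec_eq_iff row_def)
    then show ?thesis using True by simp
  next
    case False
    then show ?thesis
      using det_identical_rows[of j k "\<chi> l. if l = k then row j A else row l A"]
      by (simp add: row_def vec_eq_iff)
  qed
  have "(A ** adjugate A) $ j $ k = (\<Sum>i\<in>UNIV. det (\<chi> l. if l = k then A$j$i *s axis i 1 else row l A))"
    for j k by (simp add: matrix_matrix_mult_def adjugate_def det_row_mul)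
  also have "\<dots> j k = det (\<chi> l. if l = k then row j A else row l A)" for j k
    using det_linear_row_sum[of UNIV k "\<lambda>_ i. A$j$i *s axis i 1" "\<lambda>l. row l A"]
    unfolding rows by simp
  finally show ?thesis by (simp add: vec_eq_iff mat_def replace)
qed

lemma SL_inverse:
  fixes A :: "'a::comm_ring_1 ^ 'n::finite ^ 'n"
  assumes "det A = 1"
  shows "det (adjugate A) = 1" "A ** adjugate A = mat 1" "adjugate A ** A = mat 1"
proof -
  show right: "A ** adjugate A = mat 1" using assms by (simp add: matrix_mul_adjugate)
  then show det: "det (adjugate A) = 1" using det_mul[of A "adjugate A"] assms by simp
  have "adjugate A ** adjugate (adjugate A) = mat 1" using det by (simp add: matrix_mul_adjugate)
  moreover have "adjugate (adjugate A) = A"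
    by (metis calculation matrix_mul_assoc matrix_mul_lid matrix_mul_rid right)
  ultimately show "adjugate A ** A = mat 1" by simp
qed

lemma SL_simps [simp]: "carrier SL = {A. det A = 1}" "monoid.mult SL A B = A ** B" "one SL = mat 1"
  by (simp_all add: SL_def)

lemma group_SL: "group (SL :: ('a::comm_ring_1 ^ 'n::finite ^ 'n) monoid)"
  by (rule groupI) (auto simp: det_mul matrix_mul_assoc intro: SL_inverse)


section \<open>Congruence subgroups\<close>

lemma entrywise_dvd_iff: "(\<forall>i j. t dvd B $ i $ j) \<longleftrightarrow> (\<exists>X. B = mat t ** X)"
  for B :: "'a::comm_ring_1 ^ 'n::finite ^ 'm"
proof
  assume "\<forall>i j. t dvd B $ i $ j"
  then have "B = mat t ** (\<chi> i j. SOME b. B $ i $ j = t * b)"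
    by (simp add: vec_eq_iff dvd_def) (metis (mono_tags) someI_ex)
  then show "\<exists>X. B = mat t ** X" ..
qed auto

lemma cong_sub_iff:
  "A \<in> cong_sub p m \<longleftrightarrow> det A = 1 \<and> (\<exists>X. A = mat 1 + mat (of_nat p ^ m) ** X)"
  for A :: "'a::comm_ring_1 ^ 'n::finite ^ 'n"
proof -
  have "(\<forall>i j. \<exists>b. (A - mat 1) $ i $ j = of_nat p ^ m * b) \<longleftrightarrow> (\<exists>X. A - mat 1 = mat (of_nat p ^ m) ** X)"
    unfolding entrywise_dvd_iff[symmetric] dvd_def ..
  then show ?thesis by (auto simp: cong_sub_def algebra_simps)
qed

lemma subgroup_cong_sub: "subgroup (cong_sub p m :: ('a::comm_ring_1 ^ 'n::finite ^ 'n) set) SL"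
proof -
  interpret SL: group "SL :: ('a ^ 'n ^ 'n) monoid" by (rule group_SL)
  let ?t = "of_nat p ^ m :: 'a"
  show ?thesis
  proof (rule SL.subgroupI)
    have "mat 1 \<in> (cong_sub p m :: ('a ^ 'n ^ 'n) set)"
      unfolding cong_sub_iff by (intro conjI exI[of _ 0]) simp_all
    then show "cong_sub p m \<noteq> ({} :: ('a ^ 'n ^ 'n) set)" by blast
  next
    fix A B :: "'a ^ 'n ^ 'n"
    assume "A \<in> cong_sub p m" "B \<in> cong_sub p m"
    then show "A \<otimes>\<^bsub>SL\<^esub> B \<in> cong_sub p m"
      by (auto simp: cong_sub_iff det_mul mat_one_add_scaled_mult)
  next
    fix A :: "'a ^ 'n ^ 'n"
    assume "A \<in> cong_sub p m"
    then obtain X where det: "det A = 1" and A: "A = mat 1 + mat ?t ** X"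
      by (auto simp: cong_sub_iff)
    have inv: "inv\<^bsub>SL\<^esub> A = adjugate A"
      by (rule SL.inv_equality) (use SL_inverse[OF det] det in auto)
    have "adjugate A = adjugate A ** A - adjugate A ** (mat ?t ** X)"
      by (simp add: A matrix_add_ldistrib)
    also have "\<dots> = mat 1 - mat ?t ** (adjugate A ** X)"
      by (metis SL_inverse(3)[OF det] matrix_mul_assoc mat_mult_commute)
    also have "\<dots> = mat 1 + mat ?t ** (- (adjugate A ** X))"
      by (simp add: vec_eq_iff)
    finally show "inv\<^bsub>SL\<^esub> A \<in> cong_sub p m"
      unfolding inv cong_sub_iff using SL_inverse(1)[OF det] by blast
  qed (auto simp: cong_sub_def)
qed

lemma group_cong_sub: "group (SL\<lparr>carrier := cong_sub p m\<rparr> :: ('a::comm_ring_1 ^ 'n::finite ^ 'n) monoid)"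
  by (rule group.subgroup_imp_group[OF group_SL subgroup_cong_sub])

lemma group_free_mod_group: "group (free_mod_group q V)"
  unfolding free_mod_group_def by (rule sum_group) simp

lemma carrier_free_mod_group:
  "q \<noteq> 0 \<Longrightarrow> carrier (free_mod_group q V) = {g \<in> V \<rightarrow>\<^sub>E {0..<int q}. finite {v\<in>V. g v \<noteq> 0}}"
  unfolding free_mod_group_def by (subst carrier_sum_group) (auto simp: carrier_integer_mod_group)

lemma one_free_mod_group [simp]: "one (free_mod_group q V) = (\<lambda>v\<in>V. 0)"
  by (simp add: free_mod_group_def)

lemma mult_free_mod_group [simp]:
  "monoid.mult (free_mod_group q V) = (\<lambda>x y. \<lambda>v\<in>V. (x v + y v) mod int q)"
  by (simp add: free_mod_group_def)


section \<open>The quotient \<open>\<Gamma>\<^sub>r / \<Gamma>\<^sub>r\<^sub>+\<^sub>s\<close>\<close>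

text \<open>The index set \<open>I\<close> enumerates all matrix positions except \<open>(corner, corner)\<close>; that entry
  is omitted because it is determined by the others modulo \<open>p\<^sup>s\<close> (see \<open>corner_dvd\<close>).\<close>

locale congruence_quotient =
  fixes V :: "'a::comm_ring_1 set" and p r s :: nat
    and I :: "'i set" and e :: "'i \<Rightarrow> 'n::finite \<times> 'n" and corner :: 'n
  assumes basis: "Z_basis V" and p_nonzero: "p \<noteq> 0" and s_le_r: "s \<le> r"
    and e_bij: "bij_betw e I (UNIV - {(corner, corner)})"
begin

abbreviation pr :: 'a where "pr \<equiv> of_nat p ^ r"

abbreviation ps :: 'a where "ps \<equiv> of_nat p ^ s"

abbreviation q :: nat where "q \<equiv> p ^ s"

abbreviation target :: "('i \<Rightarrow> 'a \<Rightarrow> int) monoid" where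
  "target \<equiv> sum_group I (\<lambda>_. free_mod_group q V)"

abbreviation Gamma :: "('a ^ 'n ^ 'n) monoid" where
  "Gamma \<equiv> SL\<lparr>carrier := cong_sub p r\<rparr>"

definition reduce :: "'a ^ 'n ^ 'n \<Rightarrow> 'i \<Rightarrow> 'a \<Rightarrow> int" where
  "reduce X = (\<lambda>k\<in>I. \<lambda>v\<in>V. basis_coord V (X $ fst (e k) $ snd (e k)) v mod int q)"

definition level_quotient :: "'a ^ 'n ^ 'n \<Rightarrow> 'a ^ 'n ^ 'n" where
  "level_quotient A = (SOME X. A = mat 1 + mat pr ** X)"

definition leading_term :: "'a ^ 'n ^ 'n \<Rightarrow> 'i \<Rightarrow> 'a \<Rightarrow> int" where
  "leading_term A = reduce (level_quotient A)"

lemma q_nonzero: "q \<noteq> 0"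
  using p_nonzero by simp

lemma finite_I: "finite I"
  using bij_betw_finite[OF e_bij] by simp

lemma group_target: "group target"
  by (rule sum_group) (rule group_free_mod_group)

lemma carrier_target:
  "carrier target = I \<rightarrow>\<^sub>E {g \<in> V \<rightarrow>\<^sub>E {0..<int q}. finite {v\<in>V. g v \<noteq> 0}}"
  using finite_I
  by (subst carrier_sum_group) (auto intro: group_free_mod_group simp: carrier_free_mod_group[OF q_nonzero])

lemma level_quotient_eq: "level_quotient (mat 1 + mat pr ** X) = X"
  unfolding level_quotient_def
proof (rule some_equality)
  fix Y
  assume "mat 1 + mat pr ** X = mat 1 + mat pr ** Y"
  then have "of_nat (p ^ r) * Y $ i $ j = of_nat (p ^ r) * X $ i $ j" for i j
    by (metis add_left_cancel mat_mult_nth of_nat_power)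
  then have "Y $ i $ j = X $ i $ j" for i j
    using Z_basis_mult_left_cancel[OF basis] p_nonzero by (metis power_eq_0_iff)
  then show "Y = X" by (simp add: vec_eq_iff)
qed simp

lemma level_quotient: "A \<in> cong_sub p r \<Longrightarrow> A = mat 1 + mat pr ** level_quotient A"
  unfolding cong_sub_iff using level_quotient_eq by auto

lemma reduce_in_carrier: "reduce X \<in> carrier target"
proof -
  have "finite {v\<in>V. (\<lambda>v\<in>V. basis_coord V x v mod int q) v \<noteq> 0}" for x
    by (rule finite_subset[OF _ basis_coord_support(1)[OF basis, of x]]) auto
  then show ?thesis
    using q_nonzero unfolding carrier_target reduce_def by auto
qed

lemma reduce_add: "reduce (X + Y) = reduce X \<otimes>\<^bsub>target\<^esub> reduce Y"
  by (auto simp: reduce_def basis_coord_add[OF basis] mod_add_eq fun_eq_iff)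

lemma reduce_eq_one_iff:
  "reduce X = \<one>\<^bsub>target\<^esub> \<longleftrightarrow> (\<forall>i j. (i, j) \<noteq> (corner, corner) \<longrightarrow> ps dvd X $ i $ j)"
proof -
  have "reduce X = \<one>\<^bsub>target\<^esub> \<longleftrightarrow> (\<forall>k\<in>I. \<forall>v. int q dvd basis_coord V (X $ fst (e k) $ snd (e k)) v)"
    by (auto simp: reduce_def fun_eq_iff restrict_def dvd_eq_mod_eq_0) (metis basis_coord_outside mod_0)
  also have "\<dots> \<longleftrightarrow> (\<forall>k\<in>I. ps dvd X $ fst (e k) $ snd (e k))"
    by (simp only: Z_basis_of_nat_dvd_iff[OF basis, of "p ^ s", unfolded of_nat_power[where 'a = 'a]])
  also have "\<dots> \<longleftrightarrow> (\<forall>\<sigma>\<in>e ` I. ps dvd X $ fst \<sigma> $ snd \<sigma>)"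
    by simp
  also have "e ` I = UNIV - {(corner, corner)}"
    using e_bij by (simp add: bij_betw_def)
  finally show ?thesis by (simp only: Ball_def split_paired_All Diff_iff UNIV_I singleton_iff simp_thms fst_conv snd_conv)
qed


lemma reduce_cong:
  assumes "\<And>i j. (i, j) \<noteq> (corner, corner) \<Longrightarrow> X $ i $ j = Y $ i $ j"
  shows "reduce X = reduce Y"
proof -
  have "X $ fst (e k) $ snd (e k) = Y $ fst (e k) $ snd (e k)" if "k \<in> I" for k
    using that e_bij assms[of "fst (e k)" "snd (e k)"] by (auto simp: bij_betw_def)
  then show ?thesis
    unfolding reduce_def by (intro restrict_ext) simp
qed

lemma ps_dvd_pr: "ps dvd pr"
  using s_le_r by (simp add: le_imp_power_dvd)

lemma reduce_multiple: "reduce (mat pr ** Z) = \<one>\<^bsub>target\<^esub>"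
  unfolding reduce_eq_one_iff using ps_dvd_pr by simp

lemma leading_term_mult:
  assumes "A \<in> cong_sub p r" "B \<in> cong_sub p r"
  shows "leading_term (A ** B) = leading_term A \<otimes>\<^bsub>target\<^esub> leading_term B"
proof -
  interpret target: group target by (rule group_target)
  let ?X = "level_quotient A" and ?Y = "level_quotient B"
  have "A ** B = mat 1 + mat pr ** (?X + ?Y + mat pr ** (?X ** ?Y))"
    using level_quotient[OF assms(1)] level_quotient[OF assms(2)] mat_one_add_scaled_mult by metis
  then have "leading_term (A ** B) = reduce ?X \<otimes>\<^bsub>target\<^esub> reduce ?Y \<otimes>\<^bsub>target\<^esub> \<one>\<^bsub>target\<^esub>"
    by (simp only: leading_term_def level_quotient_eq reduce_add reduce_multiple)
  also have "\<dots> = reduce ?X \<otimes>\<^bsub>target\<^esub> reduce ?Y"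
    by (intro target.r_one target.m_closed reduce_in_carrier)
  finally show ?thesis unfolding leading_term_def .
qed

lemma group_hom_leading_term: "group_hom Gamma target leading_term"
  by (auto simp: group_hom_def group_hom_axioms_def hom_def group_cong_sub group_target
      leading_term_def reduce_in_carrier leading_term_mult[unfolded leading_term_def])

lemma cong_sub_add_iff:
  "A \<in> cong_sub p (r + s) \<longleftrightarrow> A \<in> cong_sub p r \<and> (\<forall>i j. ps dvd level_quotient A $ i $ j)"
proof -
  have scale: "mat (of_nat p ^ (r + s)) ** Y = mat pr ** (mat ps ** Y)" for Y :: "'a ^ 'n ^ 'n"
    by (simp add: matrix_mul_assoc mat_mult_mat power_add)
  show ?thesis
  proof
    assume "A \<in> cong_sub p (r + s)"
    then obtain Y where det: "det A = 1" and A: "A = mat 1 + mat pr ** (mat ps ** Y)"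
      unfolding cong_sub_iff scale by blast
    then have "A \<in> cong_sub p r"
      unfolding cong_sub_iff by blast
    moreover have "level_quotient A = mat ps ** Y"
      unfolding A by (rule level_quotient_eq)
    ultimately show "A \<in> cong_sub p r \<and> (\<forall>i j. ps dvd level_quotient A $ i $ j)"
      by simp
  next
    assume "A \<in> cong_sub p r \<and> (\<forall>i j. ps dvd level_quotient A $ i $ j)"
    then obtain Y where A: "A \<in> cong_sub p r" and "level_quotient A = mat ps ** Y"
      unfolding entrywise_dvd_iff by blast
    then have "A = mat 1 + mat (of_nat p ^ (r + s)) ** Y"
      unfolding scale using level_quotient by metis
    with A show "A \<in> cong_sub p (r + s)"
      unfolding cong_sub_iff by blast
  qed
qed

lemma corner_dvd:
  assumes A: "A \<in> cong_sub p r"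
    and off_corner: "\<And>i j. (i, j) \<noteq> (corner, corner) \<Longrightarrow> ps dvd level_quotient A $ i $ j"
  shows "ps dvd level_quotient A $ corner $ corner"
proof -
  let ?X = "level_quotient A"
  let ?x = "?X $ corner $ corner"
  let ?D = "axis corner (axis corner ?x)"
  have "\<forall>i j. ps dvd (?X - ?D) $ i $ j"
    using off_corner by (auto simp: axis_def)
  then obtain N where "?X - ?D = mat ps ** N"
    unfolding entrywise_dvd_iff by blast
  then have X: "?X = ?D + mat ps ** N"
    by (simp add: diff_eq_eq add.commute)
  have "A = mat 1 + mat pr ** (?D + mat ps ** N)"
    unfolding X[symmetric] by (rule level_quotient[OF A])
  also have "\<dots> = (mat 1 + mat pr ** ?D) + mat (pr * ps) ** N"
    by (simp add: matrix_add_ldistrib matrix_mul_assoc mat_mult_mat add.assoc)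
  finally have "A = (mat 1 + mat pr ** ?D) + mat (pr * ps) ** N" .
  \<comment> \<open>modulo \<open>p\<^sup>r\<^sup>+\<^sup>s\<close>, \<open>A\<close> agrees with a diagonal matrix of determinant \<open>1 + p\<^sup>r x\<close>\<close>
  then have "pr * ps dvd det A - det (mat 1 + mat pr ** ?D)"
    using det_add_multiple_dvd by metis
  moreover have "det A = 1" using A by (simp add: cong_sub_iff)
  moreover have "det (mat 1 + mat pr ** ?D) = 1 + pr * ?x"
    by (simp add: mat_mult_axis det_mat_one_add_axis_diag)
  ultimately have "pr * ps dvd pr * ?x"
    by (simp add: dvd_minus_iff)
  then obtain c where "of_nat (p ^ r) * ?x = of_nat (p ^ r) * (ps * c)"
    by (auto simp: dvd_def mult.assoc of_nat_power)
  moreover have "p ^ r \<noteq> 0" using p_nonzero by simp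
  ultimately have "?x = ps * c"
    by (rule Z_basis_mult_left_cancel[OF basis, rotated])
  then show ?thesis by simp
qed

lemma kernel_leading_term: "kernel Gamma target leading_term = cong_sub p (r + s)"
proof -
  have "(\<forall>i j. (i, j) \<noteq> (corner, corner) \<longrightarrow> ps dvd level_quotient A $ i $ j)
      \<longleftrightarrow> (\<forall>i j. ps dvd level_quotient A $ i $ j)"
    if "A \<in> cong_sub p r" for A
  proof
    assume off_corner: "\<forall>i j. (i, j) \<noteq> (corner, corner) \<longrightarrow> ps dvd level_quotient A $ i $ j"
    then have "ps dvd level_quotient A $ corner $ corner"
      using corner_dvd[OF that] by blast
    with off_corner show "\<forall>i j. ps dvd level_quotient A $ i $ j"
      by (metis prod.inject)
  qed simp
  then have "leading_term A = \<one>\<^bsub>target\<^esub> \<longleftrightarrow> (\<forall>i j. ps dvd level_quotient A $ i $ j)"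
    if "A \<in> cong_sub p r" for A
    using that unfolding leading_term_def reduce_eq_one_iff by blast
  then show ?thesis
    by (auto simp: kernel_def cong_sub_add_iff)
qed

lemma subgroup_leading_term_image: "subgroup (leading_term ` cong_sub p r) target"
  using group_hom.img_is_subgroup[OF group_hom_leading_term] by simp

lemma reduce_in_image_if_det:
  assumes "det (mat 1 + mat pr ** X) = 1"
  shows "reduce X \<in> leading_term ` cong_sub p r"
proof -
  have "mat 1 + mat pr ** X \<in> cong_sub p r"
    using assms unfolding cong_sub_iff by blast
  moreover have "leading_term (mat 1 + mat pr ** X) = reduce X"
    by (simp only: leading_term_def level_quotient_eq)
  ultimately show ?thesis by (metis image_eqI)
qed

lemma reduce_axis_in_image: "reduce (axis i (axis j x)) \<in> leading_term ` cong_sub p r"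
proof -
  interpret image: subgroup "leading_term ` cong_sub p r" target
    by (rule subgroup_leading_term_image)
  have off_diagonal: "reduce (axis k (axis l y)) \<in> leading_term ` cong_sub p r" if "k \<noteq> l" for k l y
    using that by (intro reduce_in_image_if_det) (simp add: mat_mult_axis det_mat_one_add_axis)
  consider "i \<noteq> j" | "i = j" "i = corner" | "i = j" "i \<noteq> corner" by blast
  then show ?thesis
  proof cases
    case 1
    then show ?thesis by (rule off_diagonal)
  next
    case 2
    then have "reduce (axis i (axis j x)) = reduce 0"
      by (intro reduce_cong) (auto simp: axis_def)
    also have "\<dots> = \<one>\<^bsub>target\<^esub>"
      unfolding reduce_eq_one_iff by simp
    finally show ?thesis by (simp only: image.one_closed)
  next
    case 3
    \<comment> \<open>\<open>W = x (e\<^sub>i - e\<^sub>c) (e\<^sub>i + e\<^sub>c)\<^sup>T\<close> has square zero, so \<open>I + p\<^sup>r W\<close> lies in \<open>SL\<close>;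
      it differs from \<open>x E\<^sub>i\<^sub>i\<close> off the corner by two transvections\<close>
    define W where "W = axis i (axis i x + axis corner x) - axis corner (axis i x + axis corner x)"
    let ?v = "axis i (pr * x) + axis corner (pr * x)"
    have "mat pr ** W = axis i ?v - axis corner ?v"
      by (simp add: W_def vec_eq_iff axis_def)
    then have "det (mat 1 + mat pr ** W) = 1"
      by (simp only: det_mat_one_add_axis_diff[OF 3(2)])
    then have "reduce W \<in> leading_term ` cong_sub p r"
      by (rule reduce_in_image_if_det)
    moreover have "reduce (axis i (axis corner (- x))) \<in> leading_term ` cong_sub p r"
      "reduce (axis corner (axis i x)) \<in> leading_term ` cong_sub p r"
      using 3 by (auto intro: off_diagonal)
    moreover have "reduce (axis i (axis j x))
        = reduce W \<otimes>\<^bsub>target\<^esub> reduce (axis i (axis corner (- x))) \<otimes>\<^bsub>target\<^esub> reduce (axis corner (axis i x))"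
      unfolding reduce_add[symmetric] using 3 by (intro reduce_cong) (auto simp: W_def axis_def)
    ultimately show ?thesis
      by (simp only: image.m_closed)
  qed
qed

lemma reduce_in_image: "reduce X \<in> leading_term ` cong_sub p r"
proof -
  interpret image: subgroup "leading_term ` cong_sub p r" target
    by (rule subgroup_leading_term_image)
  have "reduce (\<chi> i j. if (i, j) \<in> T then X $ i $ j else 0) \<in> leading_term ` cong_sub p r"
    if "finite T" for T
    using that
  proof (induction T rule: finite_induct)
    case empty
    have "reduce (\<chi> i j. if (i, j) \<in> {} then X $ i $ j else 0) = \<one>\<^bsub>target\<^esub>"
      unfolding reduce_eq_one_iff by simp
    then show ?case by (simp only: image.one_closed)
  next
    case (insert \<sigma> T)
    obtain a b where \<sigma>: "\<sigma> = (a, b)" by fastforce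
    have "(\<chi> i j. if (i, j) \<in> insert \<sigma> T then X $ i $ j else 0)
        = (\<chi> i j. if (i, j) \<in> T then X $ i $ j else 0) + axis a (axis b (X $ a $ b))"
      using insert.hyps by (auto simp: \<sigma> vec_eq_iff axis_def)
    then show ?case
      using insert.IH reduce_axis_in_image by (simp only: reduce_add image.m_closed)
  qed
  from this[of UNIV] show ?thesis by simp
qed

lemma reduce_onto: "y \<in> carrier target \<Longrightarrow> \<exists>X. reduce X = y"
proof -
  assume y: "y \<in> carrier target"
  define lift :: "('a \<Rightarrow> int) \<Rightarrow> 'a" where "lift g = (\<Sum>v\<in>{v\<in>V. g v \<noteq> 0}. of_int (g v) * v)" for g
  define X where "X = (\<chi> i j. lift (y (inv_into I e (i, j))))"
  have "reduce X k v = y k v" for k v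
  proof (cases "k \<in> I \<and> v \<in> V")
    case True
    have "inv_into I e (e k) = k"
      using True by (blast intro: bij_betw_inv_into_left[OF e_bij])
    then have entry: "X $ fst (e k) $ snd (e k) = lift (y k)"
      by (simp add: X_def)
    have yk: "y k \<in> V \<rightarrow>\<^sub>E {0..<int q}" "finite {v\<in>V. y k v \<noteq> 0}"
      using y True by (auto simp: carrier_target)
    have coord: "basis_coord V (X $ fst (e k) $ snd (e k)) v = y k v"
      unfolding entry lift_def using yk(2) True by (intro basis_coord_of_coeffs[OF basis]) simp_all
    have "y k v \<in> {0..<int q}" using yk True by auto
    then have "y k v mod int q = y k v" by (simp add: mod_pos_pos_trivial)
    moreover have "reduce X k v = basis_coord V (X $ fst (e k) $ snd (e k)) v mod int q"
      using True by (simp add: reduce_def)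
    ultimately show ?thesis by (simp only: coord)
  next
    case outside: False
    have y': "y \<in> I \<rightarrow>\<^sub>E (V \<rightarrow>\<^sub>E {0..<int q})"
      using y unfolding carrier_target by blast
    show ?thesis
    proof (cases "k \<in> I")
      case True
      then have "y k \<in> V \<rightarrow>\<^sub>E {0..<int q}" "v \<notin> V"
        using y' outside by auto
      then have "y k v = undefined" by (rule PiE_arb)
      then show ?thesis using True \<open>v \<notin> V\<close> by (simp add: reduce_def)
    next
      case False
      with y' have "y k = undefined" by (rule PiE_arb)
      then show ?thesis using False by (simp add: reduce_def)
    qed
  qed
  then show "\<exists>X. reduce X = y" by blast
qed

lemma leading_term_onto: "leading_term ` cong_sub p r = carrier target"
  using reduce_onto reduce_in_image subgroup.subset[OF subgroup_leading_term_image] by blast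

theorem congruence_quotient_iso: "Gamma Mod cong_sub p (r + s) \<cong> target"
proof -
  interpret leading_term: group_hom Gamma target leading_term
    by (rule group_hom_leading_term)
  from leading_term.FactGroup_iso show ?thesis
    by (simp add: leading_term_onto kernel_leading_term)
qed

end

theorem theorem3p5:
  fixes V :: "'a::comm_ring_1 set" and p r s :: nat
  assumes "Z_basis V"
    and "CARD('n::finite) \<ge> 2"
    and "prime p"
    and "finite V \<or> s = 1"
    and "1 \<le> s" and "s \<le> r"
  shows "((SL :: ('a^'n^'n) monoid)\<lparr>carrier := cong_sub p r\<rparr>) Mod (cong_sub p (r + s) :: ('a^'n^'n) set)
           \<cong> sum_group {..<CARD('n)^2 - 1} (\<lambda>_. free_mod_group (p^s) V)"
  \<comment> \<open>\<open>free_mod_group\<close> is the finitely supported direct sum\<close>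
proof -
  fix corner :: 'n
  let ?off_corner = "UNIV - {(corner, corner)}"
  have "card (UNIV :: ('n \<times> 'n) set) = CARD('n) * CARD('n)"
    by (simp add: card_cartesian_product flip: UNIV_Times_UNIV)
  then have "card ?off_corner = CARD('n)^2 - 1"
    by (simp add: card_Diff_singleton power2_eq_square)
  then obtain e :: "nat \<Rightarrow> 'n \<times> 'n" where e: "bij_betw e {..<CARD('n)^2 - 1} ?off_corner"
    using ex_bij_betw_nat_finite[of ?off_corner] by (auto simp: atLeast0LessThan)
  have "p \<noteq> 0" using \<open>prime p\<close> by auto
  then interpret congruence_quotient V p r s "{..<CARD('n)^2 - 1}" e corner
    using \<open>Z_basis V\<close> \<open>s \<le> r\<close> e by unfold_locales
  show ?thesis by (rule congruence_quotient_iso)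
qed

end
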